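(* Let $A\in\mathbb R^{N\times N}$ be a non-singular $M$-matrix and let $p<1$. If $x\in\mathbb R^N$ with $x>0$ satisfies $Ax\le x^p$ and $y\in\mathbb R^N$ with $y>0$ satisfies $Ay\ge y^p$, then $x\le y$. In particular, the equation $Ax=x^p$ has a unique solution $x\in\mathbb R^N$ with $x>0$.
   Context: Inequalities between vectors/matrices are componentwise; for $x\in(0,\infty)^N$, $x^p:=(x_1^p,\dots,x_N^p)^\top$. A matrix $A\in\mathbb R^{N\times N}$ is a $Z$-matrix if $A_{ij}\le 0$ for all $i\neq j$. A $Z$-matrix $A$ is an $M$-matrix if $A=s\,\mathrm{Id}-B$ for some matrix $B\ge 0$ and some $s\in\mathbb R$ with $s\ge\rho(B)$ ($\rho(B)$ the spectral radius); it is a non-singular $M$-matrix if in addition it is invertible. *)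

theory Defs
  imports "HOL-Analysis.Analysis"
begin

definition spectral_radius :: "real^'n^'n \<Rightarrow> real" where
  "spectral_radius B = Sup {norm \<mu> | \<mu>::complex. \<exists>v::complex^'n. v \<noteq> 0 \<and>
       (\<chi> i j. complex_of_real (B $ i $ j)) *v v = \<mu> *s v}"

definition Z_matrix :: "real^'n^'n \<Rightarrow> bool" where
  "Z_matrix A \<longleftrightarrow> (\<forall>i j. i \<noteq> j \<longrightarrow> A $ i $ j \<le> 0)"

definition M_matrix :: "real^'n^'n \<Rightarrow> bool" where
  "M_matrix A \<longleftrightarrow> Z_matrix A \<and>
     (\<exists>s::real. \<exists>B::real^'n^'n. (\<forall>i j. B $ i $ j \<ge> 0) \<and>
        A = s *\<^sub>R mat 1 - B \<and> s \<ge> spectral_radius B)"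

definition nonsingular_M_matrix :: "real^'n^'n \<Rightarrow> bool" where
  "nonsingular_M_matrix A \<longleftrightarrow> M_matrix A \<and> invertible A"

end

theory Submission
  imports Defs
begin

(*
  Comparison: if x_i > y_i somewhere, let t = max_j x_j / y_j > 1, attained at k. Then t y - x is
  nonnegative and vanishes at k, so the sign pattern of the Z-matrix A gives (A (t y - x))_k <= 0,
  whereas the two inequalities give (A (t y - x))_k >= t y_k^p - (t y_k)^p = (t - t^p) y_k^p > 0
  because p < 1. Uniqueness of positive solutions follows at once.

  Existence: a nonsingular M-matrix A = s I - B admits u > 0 with A u > 0. The shifts t for which
  t I - B has such a vector form an open up-set containing all large t. At its infimum t0 >= s the
  matrix t0 I - B is still invertible (by the spectral radius bound, or by invertibility of A if
  t0 = s), and monotonicity of the matrices (t0 + d) I - B, d > 0, forces (t0 I - B)^-1 1 > 0, so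
  t0 would lie in the set. Scaling u gives a positive subsolution and a positive supersolution;
  among the subsolutions between them, one of maximal entry sum is a solution, since a strict
  inequality in row i could be relaxed by increasing x_i, which only decreases the other rows.
*)

section \<open>Z-matrices and semipositivity\<close>

text \<open>Usually only \<open>u \<ge> 0\<close> is required; for Z-matrices the two notions agree.\<close>
definition semipositive :: "real^'n^'n \<Rightarrow> bool" where
  "semipositive M \<longleftrightarrow> (\<exists>u. (\<forall>i. 0 < u $ i) \<and> (\<forall>i. 0 < (M *v u) $ i))"

lemma ex_max_index:
  fixes f :: "'n::finite \<Rightarrow> 'a::linorder"
  obtains k where "\<And>j. f j \<le> f k"
proof -
  have "Max (range f) \<in> range f"
    by (intro Max_in) auto
  then obtain k where "f k = Max (range f)"
    by (metis rangeE)
  then have "f j \<le> f k" for j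
    by simp
  then show ?thesis
    using that by blast
qed

lemma matrix_vector_mult_add_diag:
  fixes M :: "real^'n^'n"
  shows "(M + d *\<^sub>R mat 1) *v u = M *v u + d *\<^sub>R u"
  by (simp add: matrix_vector_mult_add_rdistrib flip: scaleR_matrix_vector_assoc)

lemma Z_matrix_add_diag: "Z_matrix M \<Longrightarrow> Z_matrix (M + d *\<^sub>R mat 1)"
  by (simp add: Z_matrix_def mat_def)

lemma Z_matrix_row_nonpos:
  fixes M :: "real^'n^'n"
  assumes "Z_matrix M" "\<forall>j. 0 \<le> w $ j" "w $ k = 0"
  shows "(M *v w) $ k \<le> 0"
proof -
  have "(M *v w) $ k = (\<Sum>j\<in>UNIV - {k}. M $ k $ j * w $ j)"
    using assms(3) by (simp add: matrix_vector_mult_def sum.remove[of UNIV k])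
  also have "\<dots> \<le> 0"
    using assms(1,2) by (intro sum_nonpos) (auto simp: Z_matrix_def intro: mult_nonpos_nonneg)
  finally show ?thesis .
qed

lemma Z_matrix_semipositive_monotone:
  fixes M :: "real^'n^'n"
  assumes Z: "Z_matrix M" and "semipositive M" and Mv: "\<forall>i. 0 \<le> (M *v v) $ i"
  shows "0 \<le> v $ i"
proof (rule ccontr)
  assume neg: "\<not> 0 \<le> v $ i"
  obtain u where u: "\<forall>i. 0 < u $ i" "\<forall>i. 0 < (M *v u) $ i"
    using assms(2) unfolding semipositive_def by blast
  obtain k where k: "\<And>j. - v $ j / u $ j \<le> - v $ k / u $ k"
    using ex_max_index[of "\<lambda>j. - v $ j / u $ j"] by blast
  define l where "l = - v $ k / u $ k"
  have "0 < - v $ i / u $ i"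
    using neg u(1) by (simp add: divide_neg_pos)
  with k[of i] have "0 < l"
    unfolding l_def by linarith
  define w where "w = v + l *\<^sub>R u"
  have "0 \<le> w $ j" for j
  proof -
    have "- v $ j / u $ j \<le> l"
      using k[of j] unfolding l_def .
    then have "- v $ j \<le> l * u $ j"
      using u(1) pos_divide_le_eq by blast
    then show ?thesis
      by (simp add: w_def)
  qed
  moreover have "w $ k = 0"
    using u(1)[rule_format, of k] by (simp add: w_def l_def)
  ultimately have "(M *v w) $ k \<le> 0"
    using Z_matrix_row_nonpos[OF Z] by blast
  moreover have "(M *v w) $ k = (M *v v) $ k + l * (M *v u) $ k"
    by (simp add: w_def matrix_vector_right_distrib matrix_vector_mult_scaleR)
  moreover have "0 < l * (M *v u) $ k"
    using u(2) \<open>0 < l\<close> by simp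
  ultimately show False
    using Mv by (metis add_nonneg_pos not_less)
qed

lemma semipositive_add_diag:
  assumes "semipositive M" "0 \<le> d"
  shows "semipositive (M + d *\<^sub>R mat 1)"
proof -
  obtain u where u: "\<forall>i. 0 < u $ i" "\<forall>i. 0 < (M *v u) $ i"
    using assms(1) unfolding semipositive_def by blast
  have "0 < ((M + d *\<^sub>R mat 1) *v u) $ i" for i
    using u[rule_format, of i] assms(2) by (simp add: matrix_vector_mult_add_diag add_pos_nonneg)
  with u(1) show ?thesis
    unfolding semipositive_def by blast
qed

lemma semipositive_diff_diag:
  assumes "semipositive M"
  shows "\<exists>d>0. semipositive (M - d *\<^sub>R mat 1)"
proof -
  obtain u where u: "\<forall>i. 0 < u $ i" "\<forall>i. 0 < (M *v u) $ i"
    using assms unfolding semipositive_def by blast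
  have "\<forall>\<^sub>F d in at_right 0. \<forall>i. d * u $ i < (M *v u) $ i"
  proof (intro eventually_all_finite)
    fix i
    have "((\<lambda>d. d * u $ i) \<longlongrightarrow> 0 * u $ i) (at_right 0)"
      by (intro tendsto_intros)
    then show "\<forall>\<^sub>F d in at_right 0. d * u $ i < (M *v u) $ i"
      using u(2) by (auto elim: order_tendstoD)
  qed
  then have "\<forall>\<^sub>F d in at_right 0. 0 < d \<and> (\<forall>i. d * u $ i < (M *v u) $ i)"
    using eventually_at_right_less by (rule eventually_conj[rotated])
  then obtain d where d: "0 < d" "\<forall>i. d * u $ i < (M *v u) $ i"
    using eventually_happens'[OF trivial_limit_at_right_real] by blast
  have "0 < ((M - d *\<^sub>R mat 1) *v u) $ i" for i
    using d(2) by (simp add: matrix_vector_mult_diff_rdistrib flip: scaleR_matrix_vector_assoc)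
  with u(1) d(1) show ?thesis
    unfolding semipositive_def by blast
qed

lemma eventually_semipositive_diag_diff:
  fixes B :: "real^'n^'n"
  shows "\<forall>\<^sub>F t in at_top. semipositive (t *\<^sub>R mat 1 - B)"
proof -
  have "\<forall>\<^sub>F t in at_top. \<forall>i. (B *v 1) $ i < t"
    by (intro eventually_all_finite eventually_gt_at_top)
  then show ?thesis
  proof (rule eventually_mono)
    fix t
    assume "\<forall>i. (B *v 1) $ i < t"
    then have "\<forall>i. 0 < ((t *\<^sub>R mat 1 - B) *v 1) $ i"
      by (simp add: matrix_vector_mult_diff_rdistrib flip: scaleR_matrix_vector_assoc)
    then show "semipositive (t *\<^sub>R mat 1 - B)"
      unfolding semipositive_def by (intro exI[of _ 1]) simp
  qed
qed

lemma Z_matrix_semipositive_limit: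
  fixes M :: "real^'n^'n"
  assumes Z: "Z_matrix M" and "invertible M"
    and shifts: "\<And>d. 0 < d \<Longrightarrow> semipositive (M + d *\<^sub>R mat 1)"
  shows "semipositive M"
proof -
  obtain N where "M ** N = mat 1"
    using \<open>invertible M\<close> invertible_right_inverse by blast
  define z where "z = N *v 1"
  have z: "M *v z = 1"
    by (simp add: z_def matrix_vector_mul_assoc \<open>M ** N = mat 1\<close>)
  obtain k where k: "\<And>j. \<bar>z $ j\<bar> \<le> \<bar>z $ k\<bar>"
    using ex_max_index[of "\<lambda>j. \<bar>z $ j\<bar>"] by blast
  define d where "d = 1 / (\<bar>z $ k\<bar> + 1)"
  have "0 < d"
    by (simp add: d_def add_nonneg_pos)
  \<comment> \<open>\<open>(M + d I) z = 1 + d z\<close> is nonnegative once \<open>d\<close> is small against \<open>z\<close>\<close>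
  have "0 \<le> ((M + d *\<^sub>R mat 1) *v z) $ i" for i
  proof -
    have "\<bar>z $ i\<bar> \<le> \<bar>z $ k\<bar> + 1"
      using k[of i] by linarith
    then have "d * \<bar>z $ i\<bar> \<le> 1"
      by (simp add: d_def add_nonneg_pos)
    moreover have "d * - \<bar>z $ i\<bar> \<le> d * z $ i"
      using \<open>0 < d\<close> by (intro mult_left_mono) auto
    ultimately show ?thesis
      using z by (simp add: matrix_vector_mult_add_diag)
  qed
  then have z_nonneg: "0 \<le> z $ i" for i
    using Z_matrix_semipositive_monotone[OF Z_matrix_add_diag[OF Z] shifts[OF \<open>0 < d\<close>]] by blast
  have "\<forall>i. 0 < z $ i"
  proof (rule allI, rule ccontr)
    fix i
    assume "\<not> 0 < z $ i"
    then have "z $ i = 0"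
      using z_nonneg[of i] by simp
    then have "(M *v z) $ i \<le> 0"
      using Z_matrix_row_nonpos[OF Z] z_nonneg by blast
    then show False
      using z by simp
  qed
  with z show ?thesis
    unfolding semipositive_def by (intro exI[of _ z]) simp
qed

section \<open>Nonsingular M-matrices are semipositive\<close>

lemma invertible_iff_trivial_kernel:
  fixes A :: "'a::field^'n^'n"
  shows "invertible A \<longleftrightarrow> (\<forall>v. A *v v = 0 \<longrightarrow> v = 0)"
  by (simp add: invertible_left_inverse matrix_left_invertible_ker)

lemma complex_matrix_eigenvalues_bounded:
  fixes C :: "complex^'n^'n"
  obtains K where "\<And>\<mu> v. v \<noteq> 0 \<Longrightarrow> C *v v = \<mu> *s v \<Longrightarrow> norm \<mu> \<le> K"
proof -
  obtain K where K: "\<And>v. norm (C *v v) \<le> norm v * K"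
    using bounded_linear.bounded[OF matrix_vector_mul_bounded_linear] by blast
  have "norm \<mu> \<le> K" if "v \<noteq> 0" "C *v v = \<mu> *s v" for \<mu> v
  proof -
    have "norm \<mu> * norm v = norm (\<mu> *s v)"
      by (simp add: norm_vec_def L2_set_right_distrib norm_mult)
    also have "\<dots> \<le> norm v * K"
      using K[of v] that(2) by simp
    finally show ?thesis
      using that(1) by (simp add: mult.commute)
  qed
  then show ?thesis
    using that by blast
qed

lemma real_eigenvalue_le_spectral_radius:
  fixes B :: "real^'n^'n"
  assumes "v \<noteq> 0" "B *v v = r *\<^sub>R v"
  shows "\<bar>r\<bar> \<le> spectral_radius B"
proof -
  define C where "C = (\<chi> i j. complex_of_real (B $ i $ j))"
  define E where "E = {norm \<mu> | \<mu>::complex. \<exists>v::complex^'n. v \<noteq> 0 \<and> C *v v = \<mu> *s v}"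
  define w where "w = (\<chi> i. complex_of_real (v $ i))"
  have "w \<noteq> 0"
    using assms(1) by (auto simp: w_def vec_eq_iff)
  moreover have "C *v w = complex_of_real r *s w"
  proof -
    have "(C *v w) $ i = complex_of_real ((B *v v) $ i)" for i
      by (simp add: C_def w_def matrix_vector_mult_def)
    then show ?thesis
      using assms(2) by (simp add: vec_eq_iff w_def)
  qed
  ultimately have "norm (complex_of_real r) \<in> E"
    unfolding E_def by blast
  then have "\<bar>r\<bar> \<in> E"
    by simp
  moreover obtain K where "\<And>\<mu> v. v \<noteq> 0 \<Longrightarrow> C *v v = \<mu> *s v \<Longrightarrow> norm \<mu> \<le> K"
    using complex_matrix_eigenvalues_bounded by blast
  then have "bdd_above E"
    unfolding E_def bdd_above_def by blast
  ultimately show ?thesis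
    unfolding spectral_radius_def C_def[symmetric] E_def[symmetric] by (rule cSup_upper)
qed

lemma invertible_diag_diff_above_spectral_radius:
  fixes B :: "real^'n^'n"
  assumes "spectral_radius B \<le> s" "invertible (s *\<^sub>R mat 1 - B)" "s \<le> t"
  shows "invertible (t *\<^sub>R mat 1 - B)"
  unfolding invertible_iff_trivial_kernel
proof (intro allI impI)
  fix v
  assume "(t *\<^sub>R mat 1 - B) *v v = 0"
  then have Bv: "B *v v = t *\<^sub>R v"
    by (simp add: matrix_vector_mult_diff_rdistrib flip: scaleR_matrix_vector_assoc)
  show "v = 0"
  proof (rule ccontr)
    assume "v \<noteq> 0"
    then have "t = s"
      using real_eigenvalue_le_spectral_radius[OF _ Bv] assms(1,3) by linarith
    then have "(s *\<^sub>R mat 1 - B) *v v = 0"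
      using Bv by (simp add: matrix_vector_mult_diff_rdistrib flip: scaleR_matrix_vector_assoc)
    with assms(2) \<open>v \<noteq> 0\<close> show False
      unfolding invertible_iff_trivial_kernel by blast
  qed
qed

lemma real_up_set_continuity_induction:
  fixes T :: "real set"
  assumes "T \<noteq> {}"
    and up: "\<And>t t'. t \<in> T \<Longrightarrow> t \<le> t' \<Longrightarrow> t' \<in> T"
    and lower_open: "\<And>t. t \<in> T \<Longrightarrow> \<exists>d>0. t - d \<in> T"
    and upper_closed: "\<And>t. s \<le> t \<Longrightarrow> (\<And>t'. t < t' \<Longrightarrow> t' \<in> T) \<Longrightarrow> t \<in> T"
  shows "s \<in> T"
proof (rule ccontr)
  assume "s \<notin> T"
  then have above_s: "s < t" if "t \<in> T" for t
    using up[OF that, of s] by force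
  then have "bdd_below T"
    by (meson bdd_below.I less_imp_le)
  have "s \<le> Inf T"
    by (intro cInf_greatest[OF \<open>T \<noteq> {}\<close>] less_imp_le above_s)
  moreover have "t \<in> T" if less: "Inf T < t" for t
  proof -
    obtain t' where "t' \<in> T" "t' < t"
      using less cInf_less_iff[OF \<open>T \<noteq> {}\<close> \<open>bdd_below T\<close>] by auto
    then show ?thesis
      using up[of t' t] by simp
  qed
  ultimately have "Inf T \<in> T"
    by (rule upper_closed)
  then obtain d where "0 < d" "Inf T - d \<in> T"
    using lower_open by blast
  then show False
    using cInf_lower[OF _ \<open>bdd_below T\<close>, of "Inf T - d"] by simp
qed

lemma nonsingular_M_matrix_semipositive:
  fixes A :: "real^'n^'n"
  assumes "nonsingular_M_matrix A"
  shows "semipositive A"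
proof -
  obtain s B where B_nonneg: "\<forall>i j. 0 \<le> B $ i $ j" and A: "A = s *\<^sub>R mat 1 - B"
    and s: "spectral_radius B \<le> s"
    using assms unfolding nonsingular_M_matrix_def M_matrix_def by blast
  have "invertible (s *\<^sub>R mat 1 - B)"
    using assms A by (simp add: nonsingular_M_matrix_def)
  have shift: "t *\<^sub>R mat 1 - B + d *\<^sub>R mat 1 = (t + d) *\<^sub>R mat 1 - B" for t d
    by (simp add: algebra_simps)
  have Z: "Z_matrix (t *\<^sub>R mat 1 - B)" for t
    using B_nonneg by (simp add: Z_matrix_def mat_def)
  define T where "T = {t. semipositive (t *\<^sub>R mat 1 - B)}"
  have "s \<in> T"
  proof (rule real_up_set_continuity_induction)
    show "T \<noteq> {}"
      using eventually_happens'[OF _ eventually_semipositive_diag_diff[of B]] by (auto simp: T_def)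
    show "t' \<in> T" if "t \<in> T" "t \<le> t'" for t t'
      using semipositive_add_diag[of "t *\<^sub>R mat 1 - B" "t' - t"] that by (simp add: T_def shift)
    show "\<exists>d>0. t - d \<in> T" if "t \<in> T" for t
      using semipositive_diff_diag[of "t *\<^sub>R mat 1 - B"] that
      by (simp add: T_def algebra_simps)
    show "t \<in> T" if "s \<le> t" and above: "\<And>t'. t < t' \<Longrightarrow> t' \<in> T" for t
    proof -
      have "semipositive (t *\<^sub>R mat 1 - B + d *\<^sub>R mat 1)" if "0 < d" for d
        using above[of "t + d"] that by (simp add: T_def shift)
      with Z invertible_diag_diff_above_spectral_radius[OF s \<open>invertible (s *\<^sub>R mat 1 - B)\<close> \<open>s \<le> t\<close>]
      show ?thesis
        unfolding T_def by (blast intro: Z_matrix_semipositive_limit)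
    qed
  qed
  then show ?thesis
    by (simp add: T_def A)
qed

section \<open>Sub- and supersolutions of \<open>A x = x\<^sup>p\<close>\<close>

lemma Z_matrix_subsolution_le_supersolution:
  fixes A :: "real^'n^'n"
  assumes Z: "Z_matrix A" and "p < 1"
    and x: "\<forall>i. (A *v x) $ i \<le> x $ i powr p"
    and y: "\<forall>i. 0 < y $ i" "\<forall>i. y $ i powr p \<le> (A *v y) $ i"
  shows "x $ i \<le> y $ i"
proof (rule ccontr)
  assume "\<not> x $ i \<le> y $ i"
  obtain k where k: "\<And>j. x $ j / y $ j \<le> x $ k / y $ k"
    using ex_max_index[of "\<lambda>j. x $ j / y $ j"] by blast
  define t where "t = x $ k / y $ k"
  have "1 < x $ i / y $ i"
    using \<open>\<not> x $ i \<le> y $ i\<close> y(1)[rule_format, of i] by (simp add: less_divide_eq)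
  then have "1 < t"
    using k[of i] unfolding t_def by linarith
  have y_k: "0 < y $ k"
    using y(1) by blast
  then have x_k: "x $ k = t * y $ k"
    by (simp add: t_def)
  define w where "w = t *\<^sub>R y - x"
  have "0 \<le> w $ j" for j
  proof -
    have "x $ j / y $ j \<le> t"
      using k[of j] unfolding t_def .
    then have "x $ j \<le> t * y $ j"
      using y(1) pos_divide_le_eq by blast
    then show ?thesis
      by (simp add: w_def)
  qed
  moreover have "w $ k = 0"
    using x_k by (simp add: w_def)
  ultimately have "(A *v w) $ k \<le> 0"
    using Z_matrix_row_nonpos[OF Z] by blast
  moreover have "(A *v w) $ k = t * (A *v y) $ k - (A *v x) $ k"
    by (simp add: w_def matrix_vector_mult_diff_distrib matrix_vector_mult_scaleR)
  moreover have "(A *v x) $ k \<le> t powr p * y $ k powr p"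
    using x[rule_format, of k] \<open>1 < t\<close> y_k by (simp add: x_k powr_mult)
  moreover have "t powr p * y $ k powr p < t * y $ k powr p"
    using powr_less_mono[OF \<open>p < 1\<close> \<open>1 < t\<close>] \<open>1 < t\<close> y_k by simp
  moreover have "t * y $ k powr p \<le> t * (A *v y) $ k"
    using y(2) \<open>1 < t\<close> by simp
  ultimately show False
    by linarith
qed

lemma semipositive_sub_and_supersolution:
  fixes A :: "real^'n^'n"
  assumes "semipositive A" "p < 1"
  obtains a b where "\<forall>i. 0 < a $ i" "\<forall>i. (A *v a) $ i \<le> a $ i powr p"
    and "\<forall>i. 0 < b $ i" "\<forall>i. b $ i powr p \<le> (A *v b) $ i"
proof -
  obtain u where u: "\<forall>i. 0 < u $ i" "\<forall>i. 0 < (A *v u) $ i"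
    using assms(1) unfolding semipositive_def by blast
  define r where "r i = u $ i powr p / (A *v u) $ i" for i
  have r_pos: "0 < r i" for i
    using u[rule_format, of i] by (simp add: r_def)
  have scaled: "(A *v (c *\<^sub>R u)) $ i = c powr p * (c powr (1 - p) * (A *v u) $ i)"
    "(c *\<^sub>R u) $ i powr p = c powr p * (r i * (A *v u) $ i)" if "0 < c" for c i
    using that u[rule_format, of i]
    by (simp_all add: matrix_vector_mult_scaleR r_def powr_mult flip: powr_add)
  have root: "\<exists>c>0. c powr (1 - p) = m" if "0 < m" for m
    using that \<open>p < 1\<close> by (intro exI[of _ "m powr (1 / (1 - p))"]) (simp add: powr_powr)
  obtain k where k: "\<And>j. - r j \<le> - r k"
    using ex_max_index[of "\<lambda>j. - r j"] by blast
  obtain c where c: "0 < c" "c powr (1 - p) = r k"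
    using root[OF r_pos] by blast
  have "(A *v (c *\<^sub>R u)) $ i \<le> (c *\<^sub>R u) $ i powr p" for i
  proof -
    have "c powr p * (r k * (A *v u) $ i) \<le> c powr p * (r i * (A *v u) $ i)"
      using k[of i] u(2)[rule_format, of i] by (intro mult_left_mono mult_right_mono) auto
    then show ?thesis
      using c by (simp only: scaled)
  qed
  moreover obtain l where l: "\<And>j. r j \<le> r l"
    using ex_max_index[of r] by blast
  obtain C where C: "0 < C" "C powr (1 - p) = r l"
    using root[OF r_pos] by blast
  have "(C *\<^sub>R u) $ i powr p \<le> (A *v (C *\<^sub>R u)) $ i" for i
  proof -
    have "C powr p * (r i * (A *v u) $ i) \<le> C powr p * (r l * (A *v u) $ i)"
      using l[of i] u(2)[rule_format, of i] by (intro mult_left_mono mult_right_mono) auto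
    then show ?thesis
      using C by (simp only: scaled)
  qed
  ultimately show ?thesis
    using that[of "c *\<^sub>R u" "C *\<^sub>R u"] u(1) c(1) C(1) by simp
qed

lemma compact_subsolutions_in_cbox:
  fixes A :: "real^'n^'n"
  assumes "\<forall>i. 0 < a $ i"
  shows "compact {x \<in> cbox a b. \<forall>i. (A *v x) $ i \<le> x $ i powr p}"
proof -
  have "closed {x \<in> cbox a b. (A *v x) $ i \<le> x $ i powr p}" for i
  proof (rule continuous_on_closed_Collect_le)
    show "continuous_on (cbox a b) (\<lambda>x. (A *v x) $ i)"
      by (intro continuous_intros linear_continuous_on matrix_vector_mul_bounded_linear)
    have "\<forall>x\<in>cbox a b. 0 < x $ i"
      using assms by (auto simp: mem_box_cart) (meson less_le_trans)
    then show "continuous_on (cbox a b) (\<lambda>x. x $ i powr p)"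
      by (intro continuous_intros) fastforce
  qed (rule closed_cbox)
  then have "closed (\<Inter>i. {x \<in> cbox a b. (A *v x) $ i \<le> x $ i powr p})"
    by (simp add: closed_INT)
  moreover have "(\<Inter>i. {x \<in> cbox a b. (A *v x) $ i \<le> x $ i powr p})
      = {x \<in> cbox a b. \<forall>i. (A *v x) $ i \<le> x $ i powr p}"
    by auto
  moreover have "bounded {x \<in> cbox a b. \<forall>i. (A *v x) $ i \<le> x $ i powr p}"
    by (rule bounded_subset[OF bounded_cbox]) auto
  ultimately show ?thesis
    by (simp add: compact_eq_bounded_closed)
qed

lemma Z_matrix_subsolution_increase:
  fixes A :: "real^'n^'n"
  assumes Z: "Z_matrix A" and x: "\<forall>j. (A *v x) $ j \<le> x $ j powr p"
    and "0 < x $ i" and strict: "(A *v x) $ i < x $ i powr p"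
  shows "\<exists>\<delta>>0. \<forall>j. (A *v (x + \<delta> *\<^sub>R axis i 1)) $ j \<le> (x + \<delta> *\<^sub>R axis i 1) $ j powr p"
proof -
  define f where "f \<delta> = (x $ i + \<delta>) powr p - \<delta> * A $ i $ i" for \<delta>
  have "isCont f 0"
    unfolding f_def using \<open>0 < x $ i\<close> by (intro continuous_intros) auto
  moreover have "f 0 = x $ i powr p"
    by (simp add: f_def)
  ultimately have "(f \<longlongrightarrow> x $ i powr p) (at 0)"
    by (simp add: isCont_def)
  then have "\<forall>\<^sub>F \<delta> in at 0. (A *v x) $ i < f \<delta>"
    using strict by (rule order_tendstoD(1))
  then have "\<forall>\<^sub>F \<delta> in at_right 0. (A *v x) $ i < f \<delta>"
    by (simp add: eventually_at_split)
  then have "\<forall>\<^sub>F \<delta> in at_right 0. 0 < \<delta> \<and> (A *v x) $ i < f \<delta>"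
    by (rule eventually_conj[OF eventually_at_right_less])
  then obtain \<delta> where "0 < \<delta>" and \<delta>: "(A *v x) $ i < f \<delta>"
    using eventually_happens'[OF trivial_limit_at_right_real] by blast
  have Ax: "(A *v (x + \<delta> *\<^sub>R axis i 1)) $ j = (A *v x) $ j + \<delta> * A $ j $ i" for j
    by (simp add: matrix_vector_right_distrib matrix_vector_mult_scaleR matrix_vector_mult_basis column_def)
  have "(A *v (x + \<delta> *\<^sub>R axis i 1)) $ j \<le> (x + \<delta> *\<^sub>R axis i 1) $ j powr p" for j
  proof (cases "j = i")
    case True
    have "(x + \<delta> *\<^sub>R axis i 1) $ i = x $ i + \<delta>"
      by (simp add: axis_def)
    with True \<delta> show ?thesis
      by (simp only: Ax) (simp add: f_def)
  next
    case False
    then have "\<delta> * A $ j $ i \<le> 0"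
      using Z \<open>0 < \<delta>\<close> by (simp add: Z_matrix_def mult_nonneg_nonpos)
    moreover have "(x + \<delta> *\<^sub>R axis i 1) $ j = x $ j"
      using False by (simp add: axis_def)
    ultimately show ?thesis
      using x[rule_format, of j] by (simp only: Ax)
  qed
  with \<open>0 < \<delta>\<close> show ?thesis
    by blast
qed

lemma Z_matrix_exists_solution:
  fixes A :: "real^'n^'n"
  assumes Z: "Z_matrix A" and p: "p < 1"
    and a: "\<forall>i. 0 < a $ i" "\<forall>i. (A *v a) $ i \<le> a $ i powr p"
    and b: "\<forall>i. 0 < b $ i" "\<forall>i. b $ i powr p \<le> (A *v b) $ i"
  shows "\<exists>x. (\<forall>i. 0 < x $ i) \<and> A *v x = (\<chi> i. x $ i powr p)"
proof -
  define S where "S = {x \<in> cbox a b. \<forall>i. (A *v x) $ i \<le> x $ i powr p}"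
  note below_b = Z_matrix_subsolution_le_supersolution[OF Z p _ b]
  have "a \<in> S"
    using a below_b by (simp add: S_def mem_box_cart)
  moreover have "compact S"
    unfolding S_def using a(1) by (rule compact_subsolutions_in_cbox)
  moreover have "continuous_on S (\<lambda>x. \<Sum>j\<in>UNIV. x $ j)"
    by (intro continuous_intros)
  \<comment> \<open>a subsolution in \<open>S\<close> with maximal entry sum is a solution\<close>
  ultimately obtain x where "x \<in> S" and max: "\<forall>y\<in>S. (\<Sum>j\<in>UNIV. y $ j) \<le> (\<Sum>j\<in>UNIV. x $ j)"
    using continuous_attains_sup by blast
  then have sub: "\<forall>i. (A *v x) $ i \<le> x $ i powr p" and a_le_x: "\<forall>i. a $ i \<le> x $ i"
    by (auto simp: S_def mem_box_cart)
  have x_pos: "0 < x $ i" for i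
    using a(1) a_le_x by (meson less_le_trans)
  have "x $ i powr p \<le> (A *v x) $ i" for i
  proof (rule ccontr)
    assume "\<not> x $ i powr p \<le> (A *v x) $ i"
    then obtain \<delta> where "0 < \<delta>"
      and y_sub: "\<forall>j. (A *v (x + \<delta> *\<^sub>R axis i 1)) $ j \<le> (x + \<delta> *\<^sub>R axis i 1) $ j powr p"
      using Z_matrix_subsolution_increase[OF Z sub x_pos] by (meson not_le)
    define y where "y = x + \<delta> *\<^sub>R axis i 1"
    have "y \<in> S"
      using y_sub below_b[of y] a_le_x \<open>0 < \<delta>\<close>
      by (auto simp: S_def mem_box_cart y_def axis_def intro: order_trans)
    moreover have "(\<Sum>j\<in>UNIV. y $ j) = (\<Sum>j\<in>UNIV. x $ j + (if j = i then \<delta> else 0))"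
      by (intro sum.cong) (auto simp: y_def axis_def)
    then have "(\<Sum>j\<in>UNIV. y $ j) = (\<Sum>j\<in>UNIV. x $ j) + \<delta>"
      by (simp add: sum.distrib)
    ultimately show False
      using max \<open>0 < \<delta>\<close> by fastforce
  qed
  with sub have "A *v x = (\<chi> i. x $ i powr p)"
    by (simp add: vec_eq_iff order_antisym)
  with x_pos show ?thesis
    by blast
qed

theorem proposition3p5:
  fixes A :: "real^'n^'n" and p :: real
  assumes "nonsingular_M_matrix A" and "p < 1"
  shows "(\<forall>x y :: real^'n.
            (\<forall>i. x $ i > 0) \<and> (\<forall>i. (A *v x) $ i \<le> x $ i powr p) \<and>
            (\<forall>i. y $ i > 0) \<and> (\<forall>i. (A *v y) $ i \<ge> y $ i powr p)
            \<longrightarrow> (\<forall>i. x $ i \<le> y $ i))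
       \<and> (\<exists>!x :: real^'n. (\<forall>i. x $ i > 0) \<and> A *v x = (\<chi> i. x $ i powr p))"
proof -
  have Z: "Z_matrix A"
    using assms(1) by (simp add: nonsingular_M_matrix_def M_matrix_def)
  note comparison = Z_matrix_subsolution_le_supersolution[OF Z \<open>p < 1\<close>]
  obtain a b where "\<forall>i. 0 < a $ i" "\<forall>i. (A *v a) $ i \<le> a $ i powr p"
    and "\<forall>i. 0 < b $ i" "\<forall>i. b $ i powr p \<le> (A *v b) $ i"
    using semipositive_sub_and_supersolution[OF nonsingular_M_matrix_semipositive[OF assms(1)] \<open>p < 1\<close>]
    by blast
  then obtain x where x: "\<forall>i. 0 < x $ i" "A *v x = (\<chi> i. x $ i powr p)"
    using Z_matrix_exists_solution[OF Z \<open>p < 1\<close>] by blast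
  have "y = x" if "\<forall>i. 0 < y $ i" "A *v y = (\<chi> i. y $ i powr p)" for y
    using that x comparison by (simp add: vec_eq_iff order_antisym)
  with x show ?thesis
    using comparison by blast
qed

end
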